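(* For every graph $G$, $1\le \operatorname{zir}(G)\le \operatorname{Z}(G)\le \overline{\operatorname{Z}}(G)\le \operatorname{ZIR}(G)$.
   Context: Graphs are simple, finite, undirected, with nonempty vertex set. Zero forcing: a blue vertex $u$ changes a white vertex $w$ to blue if $w$ is the only white neighbor of $u$; $B$ is a zero forcing set if starting from blue set $B$ eventually all vertices are blue. $\operatorname{Z}(G)$ is the minimum cardinality of a zero forcing set; $\overline{\operatorname{Z}}(G)$ is the maximum cardinality of a minimal (under inclusion) zero forcing set. A nonempty $F\subseteq V(G)$ is a fort if every $v\notin F$ satisfies $|N(v)\cap F|\ne1$. For $S\subseteq V(G)$, $x\in S$, a private fort of $x$ relative to $S$ is a fort $F$ with $S\cap F=\{x\}$. $S$ is a ZIr-set if every element of $S$ has a private fort relative to $S$. $\operatorname{zir}(G)$ (resp. $\operatorname{ZIR}(G)$) is the minimum (resp. maximum) cardinality of a maximal (under inclusion) ZIr-set of $G$. *)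

theory Defs
  imports Main
begin

definition graph :: "'a set \<Rightarrow> ('a \<Rightarrow> 'a \<Rightarrow> bool) \<Rightarrow> bool" where
  "graph V E \<longleftrightarrow> finite V \<and> V \<noteq> {} \<and>
     (\<forall>u v. E u v \<longrightarrow> u \<in> V \<and> v \<in> V) \<and>
     (\<forall>u v. E u v \<longrightarrow> E v u) \<and> (\<forall>v. \<not> E v v)"

definition nbhd :: "'a set \<Rightarrow> ('a \<Rightarrow> 'a \<Rightarrow> bool) \<Rightarrow> 'a \<Rightarrow> 'a set" where
  "nbhd V E v = {u \<in> V. E v u}"

text \<open>Vertices that become blue by repeatedly applying the colour change rule
starting from the blue set B (the colour change rule is monotone, so the final
coloring is the least closed set).\<close>
inductive_set zf_closure :: "'a set \<Rightarrow> ('a \<Rightarrow> 'a \<Rightarrow> bool) \<Rightarrow> 'a set \<Rightarrow> 'a set"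
  for V E B where
  init: "x \<in> B \<Longrightarrow> x \<in> V \<Longrightarrow> x \<in> zf_closure V E B"
| force: "u \<in> zf_closure V E B \<Longrightarrow> w \<in> nbhd V E u \<Longrightarrow>
          (\<forall>w'\<in>nbhd V E u - {w}. w' \<in> zf_closure V E B) \<Longrightarrow> w \<in> zf_closure V E B"

definition zero_forcing_set :: "'a set \<Rightarrow> ('a \<Rightarrow> 'a \<Rightarrow> bool) \<Rightarrow> 'a set \<Rightarrow> bool" where
  "zero_forcing_set V E B \<longleftrightarrow> B \<subseteq> V \<and> zf_closure V E B = V"

definition minimal_zfs :: "'a set \<Rightarrow> ('a \<Rightarrow> 'a \<Rightarrow> bool) \<Rightarrow> 'a set \<Rightarrow> bool" where
  "minimal_zfs V E B \<longleftrightarrow> zero_forcing_set V E B \<and>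
     (\<forall>B'. B' \<subset> B \<longrightarrow> \<not> zero_forcing_set V E B')"

definition Z :: "'a set \<Rightarrow> ('a \<Rightarrow> 'a \<Rightarrow> bool) \<Rightarrow> nat" where
  "Z V E = Min (card ` {B. zero_forcing_set V E B})"

definition Zbar :: "'a set \<Rightarrow> ('a \<Rightarrow> 'a \<Rightarrow> bool) \<Rightarrow> nat" where
  "Zbar V E = Max (card ` {B. minimal_zfs V E B})"

definition fort :: "'a set \<Rightarrow> ('a \<Rightarrow> 'a \<Rightarrow> bool) \<Rightarrow> 'a set \<Rightarrow> bool" where
  "fort V E F \<longleftrightarrow> F \<noteq> {} \<and> F \<subseteq> V \<and>
     (\<forall>v \<in> V - F. card (nbhd V E v \<inter> F) \<noteq> 1)"

definition private_fort :: "'a set \<Rightarrow> ('a \<Rightarrow> 'a \<Rightarrow> bool) \<Rightarrow> 'a set \<Rightarrow> 'a \<Rightarrow> 'a set \<Rightarrow> bool" where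
  "private_fort V E S x F \<longleftrightarrow> fort V E F \<and> S \<inter> F = {x}"

definition ZIr_set :: "'a set \<Rightarrow> ('a \<Rightarrow> 'a \<Rightarrow> bool) \<Rightarrow> 'a set \<Rightarrow> bool" where
  "ZIr_set V E S \<longleftrightarrow> S \<subseteq> V \<and> (\<forall>x \<in> S. \<exists>F. private_fort V E S x F)"

definition maximal_ZIr_set :: "'a set \<Rightarrow> ('a \<Rightarrow> 'a \<Rightarrow> bool) \<Rightarrow> 'a set \<Rightarrow> bool" where
  "maximal_ZIr_set V E S \<longleftrightarrow> ZIr_set V E S \<and>
     (\<forall>S'. S \<subset> S' \<longrightarrow> \<not> ZIr_set V E S')"

definition zir :: "'a set \<Rightarrow> ('a \<Rightarrow> 'a \<Rightarrow> bool) \<Rightarrow> nat" where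
  "zir V E = Min (card ` {S. maximal_ZIr_set V E S})"

definition ZIR :: "'a set \<Rightarrow> ('a \<Rightarrow> 'a \<Rightarrow> bool) \<Rightarrow> nat" where
  "ZIR V E = Max (card ` {S. maximal_ZIr_set V E S})"

end

theory Submission
  imports Defs
begin

text \<open>A zero forcing set meets every fort, since no blue vertex outside a fort can force its
first vertex; conversely the vertices left white by a failed forcing process form a fort.
Hence a minimal zero forcing set B has, for each x \<in> B, a fort meeting B exactly in x, and no
vertex can be added to B while keeping private forts, because every fort already meets B.
So minimal zero forcing sets are maximal ZIr-sets, which gives the three upper inequalities;
the lower bound holds because V itself is a fort, making every singleton a ZIr-set.\<close>

lemma zf_closure_subset: "zf_closure V E B \<subseteq> V"
proof
  fix x assume "x \<in> zf_closure V E B"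
  then show "x \<in> V"
  proof (induct rule: zf_closure.induct)
    case (force u w)
    show ?case using force(3) by (simp add: nbhd_def)
  qed
qed

lemma zero_forcing_set_self: "zero_forcing_set V E V"
  unfolding zero_forcing_set_def
  using zf_closure_subset[of V E V] by (auto intro: zf_closure.init)

lemma zero_forcing_set_inter_fort:
  assumes zfs: "zero_forcing_set V E B" and fort: "fort V E F"
  shows "B \<inter> F \<noteq> {}"
proof
  assume disjoint: "B \<inter> F = {}"
  have "x \<in> V - F" if "x \<in> zf_closure V E B" for x
    using that
  proof (induct rule: zf_closure.induct)
    case (init x)
    then show ?case using disjoint by blast
  next
    case (force u w)
    show ?case
    proof (rule ccontr)
      assume "w \<notin> V - F"
      with force(3) have "w \<in> F" by (simp add: nbhd_def)
      with force(3,4) have "nbhd V E u \<inter> F = {w}" by blast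
      then have "card (nbhd V E u \<inter> F) = 1" by simp
      with force(2) fort show False unfolding fort_def by blast
    qed
  qed
  with zfs have "V \<subseteq> V - F" unfolding zero_forcing_set_def by blast
  with fort show False unfolding fort_def by blast
qed

lemma fort_disjoint_if_not_zero_forcing_set:
  assumes "B \<subseteq> V" and "\<not> zero_forcing_set V E B"
  shows "\<exists>F. fort V E F \<and> B \<inter> F = {}"
proof -
  let ?C = "zf_closure V E B"
  have "B \<subseteq> ?C" using assms(1) by (auto intro: zf_closure.init)
  moreover have "fort V E (V - ?C)"
    unfolding fort_def
  proof (intro conjI ballI)
    show "V - ?C \<noteq> {}"
      using assms zf_closure_subset[of V E B] unfolding zero_forcing_set_def by auto
  next
    fix v assume v: "v \<in> V - (V - ?C)"
    show "card (nbhd V E v \<inter> (V - ?C)) \<noteq> 1"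
    proof
      assume "card (nbhd V E v \<inter> (V - ?C)) = 1"
      then obtain w where w: "nbhd V E v \<inter> (V - ?C) = {w}" by (auto simp: card_Suc_eq)
      have "w \<in> ?C"
      proof (rule zf_closure.force)
        show "v \<in> ?C" using v by auto
        show "w \<in> nbhd V E v" using w by auto
        show "\<forall>w'\<in>nbhd V E v - {w}. w' \<in> ?C" using w by (auto simp: nbhd_def)
      qed
      with w show False by auto
    qed
  qed auto
  ultimately show ?thesis by blast
qed

lemma minimal_zfs_imp_maximal_ZIr_set:
  assumes "minimal_zfs V E B"
  shows "maximal_ZIr_set V E B"
proof -
  have zfs: "zero_forcing_set V E B" and "B \<subseteq> V"
    using assms unfolding minimal_zfs_def zero_forcing_set_def by auto
  have "ZIr_set V E B"
    unfolding ZIr_set_def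
  proof (intro conjI ballI \<open>B \<subseteq> V\<close>)
    fix x assume "x \<in> B"
    then have "\<not> zero_forcing_set V E (B - {x})"
      using assms unfolding minimal_zfs_def by blast
    then obtain F where F: "fort V E F" "(B - {x}) \<inter> F = {}"
      using fort_disjoint_if_not_zero_forcing_set[of "B - {x}" V E] \<open>B \<subseteq> V\<close> by auto
    with zero_forcing_set_inter_fort[OF zfs] have "B \<inter> F = {x}" by blast
    with F(1) show "\<exists>F. private_fort V E B x F" unfolding private_fort_def by blast
  qed
  moreover have "\<not> ZIr_set V E S" if "B \<subset> S" for S
  proof
    assume "ZIr_set V E S"
    obtain y where y: "y \<in> S" "y \<notin> B" using \<open>B \<subset> S\<close> by blast
    with \<open>ZIr_set V E S\<close> obtain F where "fort V E F" "S \<inter> F = {y}"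
      unfolding ZIr_set_def private_fort_def by blast
    moreover have "B \<inter> F = {}" using \<open>S \<inter> F = {y}\<close> y \<open>B \<subset> S\<close> by auto
    ultimately show False using zero_forcing_set_inter_fort[OF zfs] by blast
  qed
  ultimately show ?thesis unfolding maximal_ZIr_set_def by blast
qed

lemma card_maximal_ZIr_set_pos:
  assumes "finite V" and "V \<noteq> {}" and "maximal_ZIr_set V E S"
  shows "0 < card S"
proof -
  have "S \<noteq> {}"
  proof
    assume "S = {}"
    obtain v where "v \<in> V" using assms(2) by blast
    moreover have "fort V E V" unfolding fort_def using assms(2) by auto
    ultimately have "ZIr_set V E {v}" unfolding ZIr_set_def private_fort_def by auto
    with assms(3) \<open>S = {}\<close> show False unfolding maximal_ZIr_set_def by blast
  qed
  moreover have "finite S"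
    using assms(1,3) unfolding maximal_ZIr_set_def ZIr_set_def by (blast intro: finite_subset)
  ultimately show ?thesis by auto
qed

lemma finite_subsets_of:
  assumes "finite V" and "\<And>B. P B \<Longrightarrow> B \<subseteq> V"
  shows "finite {B. P B}"
  using assms by (blast intro: finite_subset[OF _ finite_Pow_iff[THEN iffD2]])

lemma minimal_zfs_of_card_Z:
  assumes "finite V"
  obtains B where "minimal_zfs V E B" and "card B = Z V E"
proof -
  have fin: "finite {B. zero_forcing_set V E B}"
    using assms by (rule finite_subsets_of) (simp add: zero_forcing_set_def)
  have "Z V E \<in> card ` {B. zero_forcing_set V E B}"
    unfolding Z_def using fin zero_forcing_set_self by (intro Min_in) auto
  then obtain B where B: "zero_forcing_set V E B" "card B = Z V E" by auto
  have "minimal_zfs V E B"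
    unfolding minimal_zfs_def
  proof (intro conjI allI impI notI B(1))
    fix B' assume "B' \<subset> B" "zero_forcing_set V E B'"
    moreover have "finite B"
      using B(1) assms unfolding zero_forcing_set_def by (blast intro: finite_subset)
    ultimately have "card B' < Z V E" using B(2) psubset_card_mono by metis
    moreover have "Z V E \<le> card B'"
      unfolding Z_def using fin \<open>zero_forcing_set V E B'\<close> by simp
    ultimately show False by simp
  qed
  then show thesis using B(2) by (rule that)
qed

theorem corollary2p3:
  fixes V :: "'a set" and E :: "'a \<Rightarrow> 'a \<Rightarrow> bool"
  assumes "graph V E"
  shows "1 \<le> zir V E \<and> zir V E \<le> Z V E \<and> Z V E \<le> Zbar V E \<and> Zbar V E \<le> ZIR V E"
proof -
  have "finite V" and "V \<noteq> {}" using assms unfolding graph_def by auto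
  let ?M = "{B. minimal_zfs V E B}"
  let ?S = "{S. maximal_ZIr_set V E S}"
  have "?M \<subseteq> ?S" using minimal_zfs_imp_maximal_ZIr_set by blast
  have finM: "finite ?M"
    using \<open>finite V\<close> by (rule finite_subsets_of) (simp add: minimal_zfs_def zero_forcing_set_def)
  have finS: "finite ?S"
    using \<open>finite V\<close> by (rule finite_subsets_of) (simp add: maximal_ZIr_set_def ZIr_set_def)
  obtain B0 where B0: "minimal_zfs V E B0" "card B0 = Z V E"
    using minimal_zfs_of_card_Z[OF \<open>finite V\<close>] .
  have "Z V E \<in> card ` ?M" using B0 by (metis image_eqI mem_Collect_eq)
  then have "Z V E \<in> card ` ?S" using \<open>?M \<subseteq> ?S\<close> by blast
  have "Z V E \<le> Zbar V E"
    unfolding Zbar_def using finM \<open>Z V E \<in> card ` ?M\<close> by simp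
  moreover have "Zbar V E \<le> ZIR V E"
    unfolding Zbar_def ZIR_def
    using \<open>?M \<subseteq> ?S\<close> \<open>Z V E \<in> card ` ?M\<close> finS by (intro Max_mono image_mono) auto
  moreover have "zir V E \<le> Z V E"
    unfolding zir_def using finS \<open>Z V E \<in> card ` ?S\<close> by simp
  moreover have "0 < zir V E"
    unfolding zir_def using finS \<open>Z V E \<in> card ` ?S\<close>
      card_maximal_ZIr_set_pos[OF \<open>finite V\<close> \<open>V \<noteq> {}\<close>]
    by (subst Min_gr_iff) auto
  ultimately show ?thesis by simp
qed

end
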